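(* Let $E$ be a finite set and let $\mathcal{W}\subseteq\{+,-,0\}^E$ satisfy (A1), (A2), (A3). Let $U,U'\in\mathrm{asym}(\mathcal{W})$ with $\underline{U}=\underline{U'}$ and $I(U,-U')\cap\mathcal{W}=I(-U,U')\cap\mathcal{W}=\emptyset$, and let $P=U+(-U')$ (so $P\in\mathcal{P}(\mathcal{W})$). Then every $Z\in\mathcal{W}$ with $\underline{Z}\subseteq\underline{U}$ satisfies $Z_f=U_f$ for all $f\in\underline{U}\setminus\underline{P}$.
   Context: For $X\in\{+,-,0\}^E$: $X^+=\{e:X_e=+\}$, $X^-=\{e:X_e=-\}$, support $\underline{X}=X^+\cup X^-$; $(-X)_e=-X_e$; composition $(X\circ Y)_e=X_e$ if $X_e\neq0$, else $Y_e$; $S(X,Y)=(X^+\cap Y^-)\cup(X^-\cap Y^+)$. For sets, $\mathcal{A}\circ\mathcal{B}=\{A\circ B: A\in\mathcal{A}, B\in\mathcal{B}\}$. For $X,Y$ with $\underline{X}=\underline{Y}$, $X\neq Y$, $e\in S(X,Y)$: $I_e(X,Y)=\{V : \underline{V}\subseteq\underline{X}\setminus\{e\}, V_f=X_f\ \forall f\notin S(X,Y)\}$, $I(X,Y)=\bigcup_{e\in S(X,Y)}I_e(X,Y)$. Sum: $(X+Y)_e=0$ if $e\in S(X,Y)$, else $(X\circ Y)_e$. $\mathrm{sym}(\mathcal{W})=\{V: V,-V\in\mathcal{W}\}$, $\mathrm{asym}(\mathcal{W})=\{V\in\mathcal{W}: -V\notin\mathcal{W}\}$, $\mathcal{P}(\mathcal{W})=\{X+(-Y):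 X,Y\in\mathrm{asym}(\mathcal{W}), \underline{X}=\underline{Y}, I(X,-Y)\cap\mathcal{W}=I(-X,Y)\cap\mathcal{W}=\emptyset\}$. Axioms: (A1) $X,Y\in\mathcal{W}\Rightarrow X\circ Y\in\mathcal{W}$ and $X\circ(-Y)\in\mathcal{W}$; (A2) if $X,Y\in\mathcal{W}$ with $\underline{X}=\underline{Y}$ then $I_e(X,Y)\cap\mathcal{W}\neq\emptyset$ for every $e\in S(X,Y)$; (A3) $\mathcal{P}(\mathcal{W})\circ\mathcal{W}\subseteq\mathcal{W}$. *)

theory Defs
  imports Main
begin

datatype sign = Pos | Neg | Zero

type_synonym 'e svec = "'e \<Rightarrow> sign"

definition sneg :: "sign \<Rightarrow> sign" where
  "sneg s = (case s of Pos \<Rightarrow> Neg | Neg \<Rightarrow> Pos | Zero \<Rightarrow> Zero)"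

definition vneg :: "'e svec \<Rightarrow> 'e svec" where
  "vneg X = (\<lambda>e. sneg (X e))"

definition supp :: "'e svec \<Rightarrow> 'e set" where
  "supp X = {e. X e \<noteq> Zero}"

definition comp :: "'e svec \<Rightarrow> 'e svec \<Rightarrow> 'e svec" where
  "comp X Y = (\<lambda>e. if X e \<noteq> Zero then X e else Y e)"

definition sep :: "'e svec \<Rightarrow> 'e svec \<Rightarrow> 'e set" where
  "sep X Y = {e. (X e = Pos \<and> Y e = Neg) \<or> (X e = Neg \<and> Y e = Pos)}"

definition svecs :: "'e set \<Rightarrow> 'e svec set" where
  "svecs E = {X. \<forall>e. e \<notin> E \<longrightarrow> X e = Zero}"

definition Ie :: "'e set \<Rightarrow> 'e \<Rightarrow> 'e svec \<Rightarrow> 'e svec \<Rightarrow> 'e svec set" where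
  "Ie E e X Y = {V \<in> svecs E. supp V \<subseteq> supp X - {e} \<and> (\<forall>f. f \<notin> sep X Y \<longrightarrow> V f = X f)}"

definition Iset :: "'e set \<Rightarrow> 'e svec \<Rightarrow> 'e svec \<Rightarrow> 'e svec set" where
  "Iset E X Y = (\<Union>e\<in>sep X Y. Ie E e X Y)"

definition vsum :: "'e svec \<Rightarrow> 'e svec \<Rightarrow> 'e svec" where
  "vsum X Y = (\<lambda>e. if e \<in> sep X Y then Zero else comp X Y e)"

definition asym :: "'e svec set \<Rightarrow> 'e svec set" where
  "asym W = {V \<in> W. vneg V \<notin> W}"

definition Pset :: "'e set \<Rightarrow> 'e svec set \<Rightarrow> 'e svec set" where
  "Pset E W = {vsum X (vneg Y) | X Y. X \<in> asym W \<and> Y \<in> asym W \<and> supp X = supp Y \<and>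
      Iset E X (vneg Y) \<inter> W = {} \<and> Iset E (vneg X) Y \<inter> W = {}}"

definition A1 :: "'e svec set \<Rightarrow> bool" where
  "A1 W \<longleftrightarrow> (\<forall>X\<in>W. \<forall>Y\<in>W. comp X Y \<in> W \<and> comp X (vneg Y) \<in> W)"

definition A2 :: "'e set \<Rightarrow> 'e svec set \<Rightarrow> bool" where
  "A2 E W \<longleftrightarrow> (\<forall>X\<in>W. \<forall>Y\<in>W. supp X = supp Y \<longrightarrow>
      (\<forall>e\<in>sep X Y. Ie E e X Y \<inter> W \<noteq> {}))"

definition A3 :: "'e set \<Rightarrow> 'e svec set \<Rightarrow> bool" where
  "A3 E W \<longleftrightarrow> (\<forall>P\<in>Pset E W. \<forall>X\<in>W. comp P X \<in> W)"

end

theory Submission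
  imports Defs
begin

text \<open>The composition \<open>V = P \<circ> Z\<close> lies in \<open>\<W>\<close> by (A3); it agrees with \<open>Z\<close> on the
separation set \<open>S(U,-U')\<close>, which is exactly \<open>supp U - supp P\<close>, and with \<open>U\<close> elsewhere.
Emptiness of \<open>I(U,-U') \<inter> \<W>\<close> forces \<open>V = U\<close>: a zero of \<open>V\<close> on the separation set puts \<open>V\<close>
itself into \<open>I(U,-U')\<close>, and a sign disagreement of \<open>V\<close> with \<open>U\<close> yields, by (A2) applied to
\<open>U\<close> and \<open>V\<close>, an element of \<open>I(U,V) \<inter> \<W> \<subseteq> I(U,-U') \<inter> \<W>\<close>.\<close>

lemma supp_vneg [simp]: "supp (vneg X) = supp X"
  unfolding supp_def vneg_def sneg_def by (auto split: sign.splits)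

lemma sep_iff: "e \<in> sep X Y \<longleftrightarrow> X e \<noteq> Zero \<and> Y e \<noteq> Zero \<and> X e \<noteq> Y e"
  unfolding sep_def by (cases "X e"; cases "Y e") auto

lemma sep_subset_supp: "sep X Y \<subseteq> supp X"
  unfolding sep_def supp_def by auto

lemma supp_diff_supp_vsum: "supp X - supp (vsum X Y) = sep X Y"
  unfolding supp_def vsum_def comp_def sep_def by auto

lemma comp_vsum_eq:
  assumes "supp Y \<subseteq> supp X" and "supp Z \<subseteq> supp X"
  shows "comp (vsum X Y) Z e = (if e \<in> sep X Y then Z e else X e)"
  using assms unfolding supp_def comp_def vsum_def by auto

lemma Ie_mono: "sep X Y \<subseteq> sep X Y' \<Longrightarrow> Ie E e X Y \<subseteq> Ie E e X Y'"
  unfolding Ie_def by blast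

lemma vsum_vneg_in_Pset:
  assumes "X \<in> asym W" and "Y \<in> asym W" and "supp X = supp Y"
    and "Iset E X (vneg Y) \<inter> W = {}" and "Iset E (vneg X) Y \<inter> W = {}"
  shows "vsum X (vneg Y) \<in> Pset E W"
  unfolding Pset_def using assms by blast

lemma eq_if_agrees_outside_sep:
  assumes "W \<subseteq> svecs E" and "A2 E W"
    and "X \<in> W" and "V \<in> W" and "Iset E X Y \<inter> W = {}"
    and V_supp: "supp V \<subseteq> supp X"
    and V_outside: "\<And>f. f \<notin> sep X Y \<Longrightarrow> V f = X f"
  shows "V = X"
proof (rule ccontr)
  assume "V \<noteq> X"
  then obtain f where f_sep: "f \<in> sep X Y" and "V f \<noteq> X f"
    using V_outside by blast
  show False
  proof (cases "\<exists>e \<in> sep X Y. V e = Zero")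
    case True
    then obtain e where "e \<in> sep X Y" and "V e = Zero" by blast
    then have "V \<in> Ie E e X Y"
      using assms(1,4) V_supp V_outside unfolding Ie_def supp_def by blast
    with \<open>e \<in> sep X Y\<close> \<open>V \<in> W\<close> \<open>Iset E X Y \<inter> W = {}\<close> show False
      unfolding Iset_def by blast
  next
    case False
    then have V_nonzero: "V e \<noteq> Zero" if "e \<in> sep X Y" for e
      using that by blast
    have "x \<in> supp V" if "x \<in> supp X" for x
    proof (cases "x \<in> sep X Y")
      case True
      with V_nonzero show ?thesis by (simp add: supp_def)
    next
      case False
      with that V_outside show ?thesis by (simp add: supp_def)
    qed
    with V_supp have "supp V = supp X" by blast
    have "f \<in> sep X V"
      using f_sep V_nonzero[OF f_sep] \<open>V f \<noteq> X f\<close> by (auto simp: sep_iff)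
    then obtain Y' where "Y' \<in> Ie E f X V" and "Y' \<in> W"
      using \<open>A2 E W\<close> \<open>X \<in> W\<close> \<open>V \<in> W\<close> \<open>supp V = supp X\<close> unfolding A2_def by blast
    have "sep X V \<subseteq> sep X Y"
    proof
      fix x assume "x \<in> sep X V"
      then show "x \<in> sep X Y"
        using V_outside[of x] by (auto simp: sep_iff)
    qed
    with \<open>Y' \<in> Ie E f X V\<close> have "Y' \<in> Ie E f X Y"
      by (rule subsetD[OF Ie_mono, rotated])
    with f_sep \<open>Y' \<in> W\<close> have "Y' \<in> Iset E X Y \<inter> W"
      unfolding Iset_def by blast
    with \<open>Iset E X Y \<inter> W = {}\<close> show False by blast
  qed
qed

theorem lemma2p4:
  fixes E :: "'e set" and W :: "'e svec set" and U U' Z :: "'e svec"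
  assumes "finite E"
    and "W \<subseteq> svecs E"
    and "A1 W" and "A2 E W" and "A3 E W"
    and "U \<in> asym W" and "U' \<in> asym W"
    and "supp U = supp U'"
    and "Iset E U (vneg U') \<inter> W = {}" and "Iset E (vneg U) U' \<inter> W = {}"
    and "Z \<in> W" and "supp Z \<subseteq> supp U"
  shows "\<forall>f \<in> supp U - supp (vsum U (vneg U')). Z f = U f"
proof
  fix f assume "f \<in> supp U - supp (vsum U (vneg U'))"
  then have f_sep: "f \<in> sep U (vneg U')"
    by (simp add: supp_diff_supp_vsum)
  define V where "V = comp (vsum U (vneg U')) Z"
  have V_eq: "V e = (if e \<in> sep U (vneg U') then Z e else U e)" for e
    unfolding V_def using assms(8,12) by (intro comp_vsum_eq) auto
  have "V \<in> W"
    using assms(5,11) vsum_vneg_in_Pset[OF assms(6-10)] unfolding V_def A3_def by blast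
  moreover have "supp V \<subseteq> supp U"
    using assms(12) sep_subset_supp unfolding supp_def by (auto simp: V_eq split: if_splits)
  moreover have "U \<in> W"
    using assms(6) unfolding asym_def by blast
  ultimately have "V = U"
    using assms(2,4,9) by (intro eq_if_agrees_outside_sep) (auto simp: V_eq)
  then show "Z f = U f"
    using V_eq[of f] f_sep by simp
qed

end
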